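(* For every integer $n\ge1$, \[ \sum_{k=1}^{n}2^{k-1}\omega(n-k)=\sum_{\substack{m+k=n\\ m\ge1,\ k\ge0}}c_\psi(m)\,\Omega_m(k). \]
   Context: A composition of $n$ is an ordered sequence $(a_1,\dots,a_r)$ of positive integers with $a_1+\dots+a_r=n$; it is relatively prime if $\gcd(a_1,\dots,a_r)=1$. $c_\psi(n)$ is the number of relatively prime compositions of $n$. $\omega:\mathbb{Z}\to\mathbb{Z}$ is defined by $\omega(0)=1$; $\omega(m)=(-1)^j$ if $m=\frac{3j^2\pm j}{2}$ for some integer $j\ge1$; $\omega(m)=0$ otherwise (in particular for $m<0$). For $m\ge1$ and integer $k$, $\Omega_m(k)=\sum_{j\ge0}\omega(k-jm)=\omega(k)+\omega(k-m)+\omega(k-2m)+\cdots$. *)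

theory Defs
  imports Main
begin

definition compositions :: "nat \<Rightarrow> nat list set" where
  "compositions n = {xs. (\<forall>a\<in>set xs. a > 0) \<and> sum_list xs = n}"

definition c_psi :: "nat \<Rightarrow> nat" where
  "c_psi n = card {xs \<in> compositions n. Gcd (set xs) = 1}"

definition pent :: "int \<Rightarrow> int \<Rightarrow> bool" where
  "pent m j \<longleftrightarrow> j \<ge> 1 \<and> (2 * m = 3 * j^2 + j \<or> 2 * m = 3 * j^2 - j)"

definition omega :: "int \<Rightarrow> int" where
  "omega m = (if m = 0 then 1
              else if (\<exists>j. pent m j) then (-1) ^ nat (THE j. pent m j)
              else 0)"

(* Omega_m(k) = sum_{j>=0} omega(k - j m); the terms with j > k (indeed with k - j m < 0)
   vanish since m >= 1, so the sum over j = 0..k (for k >= 0) is the full series. *)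
definition Omega :: "nat \<Rightarrow> int \<Rightarrow> int" where
  "Omega m k = (\<Sum>j=0..nat k. omega (k - int j * int m))"

end

theory Submission
  imports Defs
begin

(* Sorting the 2^(i-1) compositions of i by their gcd d, and dividing by d, gives
   the divisor sum  2^(i-1) = (SUM d dvd i. c_psi d).  Since omega vanishes on negative
   arguments, Omega_m(n-m) is the sum of omega(n-i) over the multiples i <= n of m;
   exchanging the two summations turns the right-hand side into
   SUM i=1..n. (SUM d dvd i. c_psi d) * omega(n-i), which is the left-hand side. *)

lemma length_le_sum_list_pos:
  "\<forall>a\<in>set xs. a > (0::nat) \<Longrightarrow> length xs \<le> sum_list xs"
  by (induction xs) auto

lemma finite_compositions: "finite (compositions n)"
proof (rule finite_subset)
  show "compositions n \<subseteq> {xs. set xs \<subseteq> {0..n} \<and> length xs \<le> n}"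
    unfolding compositions_def using length_le_sum_list_pos member_le_sum_list by fastforce
  show "finite {xs. set xs \<subseteq> {0..n} \<and> length xs \<le> n}"
    by (rule finite_lists_length_le) auto
qed

lemma compositions_0: "compositions 0 = {[]}"
  unfolding compositions_def by (auto simp: sum_list_eq_0_iff) (metis ex_in_conv less_irrefl set_empty)

lemma compositions_eq_UN_Cons:
  assumes "n > 0"
  shows "compositions n = (\<Union>a\<in>{1..n}. Cons a ` compositions (n - a))"
proof
  show "compositions n \<subseteq> (\<Union>a\<in>{1..n}. Cons a ` compositions (n - a))"
  proof
    fix xs assume xs: "xs \<in> compositions n"
    with assms obtain a ys where "xs = a # ys"
      unfolding compositions_def by (cases xs) auto
    with xs have "a \<in> {1..n}" "ys \<in> compositions (n - a)"
      unfolding compositions_def by auto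
    with \<open>xs = a # ys\<close> show "xs \<in> (\<Union>a\<in>{1..n}. Cons a ` compositions (n - a))"
      by blast
  qed
  show "(\<Union>a\<in>{1..n}. Cons a ` compositions (n - a)) \<subseteq> compositions n"
    unfolding compositions_def by auto
qed

lemma card_compositions_eq_sum:
  assumes "n > 0"
  shows "card (compositions n) = (\<Sum>k<n. card (compositions k))"
proof -
  have "card (compositions n) = (\<Sum>a=1..n. card (Cons a ` compositions (n - a)))"
    unfolding compositions_eq_UN_Cons[OF assms]
    by (rule card_UN_disjoint) (auto simp: finite_compositions)
  also have "\<dots> = (\<Sum>a=1..n. card (compositions (n - a)))"
    by (simp add: card_image)
  also have "\<dots> = (\<Sum>k<n. card (compositions k))"
    by (rule sum.reindex_bij_witness[where i="\<lambda>k. n - k" and j="\<lambda>a. n - a"]) auto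
  finally show ?thesis .
qed

lemma card_compositions:
  assumes "n > 0"
  shows "card (compositions n) = 2 ^ (n - 1)"
  using assms
proof (induction n)
  case (Suc n)
  show ?case
  proof (cases "n = 0")
    case True
    then show ?thesis
      using card_compositions_eq_sum[of 1] by (simp add: compositions_0)
  next
    case False
    then have "card (compositions (Suc n)) = card (compositions n) + (\<Sum>k<n. card (compositions k))"
      using card_compositions_eq_sum[of "Suc n"] by simp
    also have "\<dots> = 2 * card (compositions n)"
      using card_compositions_eq_sum[of n] False by simp
    finally show ?thesis
      using Suc False by (cases n) auto
  qed
qed simp

lemma dvd_sum_list: "(\<forall>x\<in>set xs. (d::nat) dvd x) \<Longrightarrow> d dvd sum_list xs"
  by (induction xs) auto

lemma card_compositions_Gcd_eq:
  assumes "d dvd n" "n > 0"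
  shows "card {xs \<in> compositions n. Gcd (set xs) = d} = c_psi (n div d)"
proof -
  from assms obtain e where e: "n = d * e" and "d > 0"
    by (auto elim!: dvdE)
  let ?A = "{ys \<in> compositions e. Gcd (set ys) = 1}"
  have scaled: "sum_list (map ((*) d) ys) = d * sum_list ys" "Gcd ((*) d ` A) = d * Gcd A"
    for ys and A :: "nat set"
    using Gcd_mult[of d A] by (simp_all add: sum_list_const_mult)
  have "map ((*) d) ` ?A = {xs \<in> compositions n. Gcd (set xs) = d}"
  proof (intro equalityI subsetI)
    fix xs assume "xs \<in> map ((*) d) ` ?A"
    then obtain ys where ys: "ys \<in> ?A" "xs = map ((*) d) ys"
      by blast
    from ys(1) \<open>d > 0\<close> have "sum_list xs = n" "\<forall>x\<in>set xs. x > 0" "Gcd (set xs) = d"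
      by (auto simp: ys(2) scaled e compositions_def)
    then show "xs \<in> {xs \<in> compositions n. Gcd (set xs) = d}"
      unfolding compositions_def by simp
  next
    fix xs assume xs: "xs \<in> {xs \<in> compositions n. Gcd (set xs) = d}"
    define ys where "ys = map (\<lambda>x. x div d) xs"
    have "d dvd x" if "x \<in> set xs" for x
      using xs that by (auto intro: Gcd_dvd)
    then have xs_ys: "xs = map ((*) d) ys"
      unfolding ys_def by (simp add: map_idI)
    have "d * sum_list ys = d * e" "\<forall>y\<in>set ys. d * y > 0" "d * Gcd (set ys) = d"
      using xs by (auto simp: xs_ys scaled compositions_def e)
    with \<open>d > 0\<close> have "ys \<in> ?A"
      unfolding compositions_def by simp
    with xs_ys show "xs \<in> map ((*) d) ` ?A"
      by blast
  qed
  moreover have "inj_on (map ((*) d)) ?A"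
    using \<open>d > 0\<close> by (auto simp: inj_on_def list.inj_map_strong)
  then have "card (map ((*) d) ` ?A) = card ?A"
    by (rule card_image)
  moreover have "n div d = e"
    using \<open>d > 0\<close> e by simp
  ultimately show ?thesis
    unfolding c_psi_def by simp
qed

lemma sum_divisors_c_psi:
  assumes "n > 0"
  shows "(\<Sum>d | d dvd n. c_psi d) = 2 ^ (n - 1)"
proof -
  have "compositions n = (\<Union>d\<in>{d. d dvd n}. {xs \<in> compositions n. Gcd (set xs) = d})"
    unfolding compositions_def by (auto intro: dvd_sum_list Gcd_dvd)
  then have "card (compositions n) = card (\<Union>d\<in>{d. d dvd n}. {xs \<in> compositions n. Gcd (set xs) = d})"
    by (rule arg_cong)
  also have "\<dots> = (\<Sum>d | d dvd n. card {xs \<in> compositions n. Gcd (set xs) = d})"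
    using assms by (intro card_UN_disjoint) (auto simp: finite_compositions)
  also have "\<dots> = (\<Sum>d | d dvd n. c_psi (n div d))"
    using assms by (simp add: card_compositions_Gcd_eq)
  also have "\<dots> = (\<Sum>d | d dvd n. c_psi d)"
    by (rule sum.reindex_bij_witness[where i="\<lambda>d. n div d" and j="\<lambda>d. n div d"])
      (use assms in \<open>auto elim!: dvdE\<close>)
  finally show ?thesis
    using assms by (simp add: card_compositions)
qed

lemma omega_eq_0_if_neg:
  assumes "m < 0"
  shows "omega m = 0"
proof -
  have "\<not> pent m j" for j
  proof
    assume "pent m j"
    then have "j \<ge> 1" "2 * m = 3 * j\<^sup>2 + j \<or> 2 * m = 3 * j\<^sup>2 - j"
      unfolding pent_def by auto
    moreover from \<open>j \<ge> 1\<close> have "j \<le> j\<^sup>2"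
      by (simp add: power2_eq_square)
    ultimately show False
      using assms by auto
  qed
  then show ?thesis
    using assms by (simp add: omega_def)
qed

lemma Omega_eq_sum_multiples:
  assumes "m > 0"
  shows "Omega m (int n - int m) = (\<Sum>i | i \<in> {1..n} \<and> m dvd i. omega (int n - int i))"
proof -
  let ?f = "\<lambda>i. omega (int n - int i)"
  let ?g = "\<lambda>j. (j + 1) * m"
  have "Omega m (int n - int m) = (\<Sum>j=0..n-m. ?f (?g j))"
    unfolding Omega_def by (intro sum.cong) (auto simp: algebra_simps)
  also have "\<dots> = (\<Sum>i\<in>?g ` {0..n-m}. ?f i)"
    using assms by (subst sum.reindex) (auto simp: inj_on_def)
  also have "\<dots> = (\<Sum>i | i \<in> {1..n} \<and> m dvd i. ?f i)"
  proof (rule sum.mono_neutral_right)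
    show "{i. i \<in> {1..n} \<and> m dvd i} \<subseteq> ?g ` {0..n-m}"
    proof
      fix i assume i: "i \<in> {i. i \<in> {1..n} \<and> m dvd i}"
      then obtain q where q: "i = m * q"
        by blast
      with i have "q \<ge> 1"
        by (cases q) auto
      have "(q - 1) * m = m * q - m"
        by (simp add: right_diff_distrib' mult.commute)
      also have "\<dots> \<le> n - m"
        using i q by (simp add: diff_le_mono)
      finally have "(q - 1) * m \<le> n - m" .
      moreover have "q - 1 \<le> (q - 1) * m"
        using assms by simp
      ultimately have "q - 1 \<le> n - m"
        by linarith
      with q \<open>q \<ge> 1\<close> show "i \<in> ?g ` {0..n-m}"
        by (intro image_eqI[of _ _ "q - 1"]) auto
    qed
    show "\<forall>i \<in> ?g ` {0..n-m} - {i. i \<in> {1..n} \<and> m dvd i}. ?f i = 0"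
    proof
      fix i assume "i \<in> ?g ` {0..n-m} - {i. i \<in> {1..n} \<and> m dvd i}"
      with assms have "i > n"
        by auto
      then show "?f i = 0"
        by (simp add: omega_eq_0_if_neg)
    qed
  qed simp
  finally show ?thesis .
qed

lemma sum_multiples_eq_sum_divisors:
  fixes a :: "nat \<Rightarrow> 'a::comm_semiring_1"
  shows "(\<Sum>m=1..n. a m * (\<Sum>i | i \<in> {1..n} \<and> m dvd i. f i))
       = (\<Sum>i=1..n. (\<Sum>d | d dvd i. a d) * f i)"
proof -
  have "(\<Sum>m=1..n. a m * (\<Sum>i | i \<in> {1..n} \<and> m dvd i. f i))
      = (\<Sum>m=1..n. \<Sum>i\<in>{i \<in> {1..n}. m dvd i}. a m * f i)"
    by (simp add: sum_distrib_left)
  also have "\<dots> = (\<Sum>i=1..n. \<Sum>d | d \<in> {1..n} \<and> d dvd i. a d * f i)"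
    by (rule sum.swap_restrict) auto
  also have "\<dots> = (\<Sum>i=1..n. (\<Sum>d | d dvd i. a d) * f i)"
  proof (rule sum.cong)
    fix i assume "i \<in> {1..n}"
    then have "{d. d \<in> {1..n} \<and> d dvd i} = {d. d dvd i}"
      by (auto dest: dvd_imp_le intro: dvd_pos_nat)
    then show "(\<Sum>d | d \<in> {1..n} \<and> d dvd i. a d * f i) = (\<Sum>d | d dvd i. a d) * f i"
      by (simp add: sum_distrib_right)
  qed simp
  finally show ?thesis .
qed

theorem mainTheorem10:
  fixes n :: nat
  assumes "n \<ge> 1"
  shows "(\<Sum>k=1..n. 2 ^ (k - 1) * omega (int n - int k))
       = (\<Sum>m=1..n. int (c_psi m) * Omega m (int n - int m))"
proof -
  have "(\<Sum>m=1..n. int (c_psi m) * Omega m (int n - int m))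
      = (\<Sum>m=1..n. int (c_psi m) * (\<Sum>i | i \<in> {1..n} \<and> m dvd i. omega (int n - int i)))"
    by (simp add: Omega_eq_sum_multiples)
  also have "\<dots> = (\<Sum>i=1..n. (\<Sum>d | d dvd i. int (c_psi d)) * omega (int n - int i))"
    by (rule sum_multiples_eq_sum_divisors)
  also have "\<dots> = (\<Sum>k=1..n. 2 ^ (k - 1) * omega (int n - int k))"
    by (intro sum.cong refl) (simp flip: of_nat_sum add: sum_divisors_c_psi)
  finally show ?thesis ..
qed

end
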